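(* Let $X$ be an infinite compact metrizable space and $h\colon X\to X$ a minimal homeomorphism. Let $Y\subset X$ be closed with $\mathrm{int}(Y)\neq\varnothing$ and $\partial Y$ topologically $h$-small. For $y\in Y$ let $r(y)=\min\{m\ge1: h^m(y)\in Y\}$; the function $r$ takes only finitely many values, say $n(0)<n(1)<\cdots<n(l)$. For $0\le k\le l$ let $Y_k=\overline{\{y\in Y: r(y)=n(k)\}}$. Then $\partial(h^j(Y_k))$ is thin for all $0\le k\le l$ and $0\le j\le n(k)-1$.
   Context: $\partial A$ is the boundary of $A$. A closed set $F\subset X$ is topologically $h$-small if there is $m\in\mathbb{Z}_{+}$ such that whenever $d(0),\dots,d(m)$ are $m+1$ distinct integers, $h^{d(0)}(F)\cap\cdots\cap h^{d(m)}(F)=\varnothing$. For $F\subset X$ closed and $U\subset X$ open, write $F\prec U$ if there exist $M\in\mathbb{N}$, open sets $U_0,\dots,U_M\subset X$ and integers $d(0),\dots,d(M)$ such that $F\subset\bigcup_{j=0}^M U_j$, $h^{d(j)}(U_j)\subset U$ for all $j$, and the sets $h^{d(j)}(U_j)$ are pairwise disjoint. A closed set $F$ is thin if $F\prec U$ for every non-empty open $U\subset X$. *)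

theory Defs
  imports "HOL-Analysis.Analysis"
begin

definition zpow :: "('a \<Rightarrow> 'a) \<Rightarrow> int \<Rightarrow> 'a \<Rightarrow> 'a" where
  "zpow h d = (if 0 \<le> d then h ^^ nat d else (inv h) ^^ nat (- d))"

definition homeo :: "('a::topological_space \<Rightarrow> 'a) \<Rightarrow> bool" where
  "homeo h \<longleftrightarrow> bij h \<and> continuous_on UNIV h \<and> continuous_on UNIV (inv h)"

definition minimal_map :: "('a::topological_space \<Rightarrow> 'a) \<Rightarrow> bool" where
  "minimal_map h \<longleftrightarrow> (\<forall>E. closed E \<and> h ` E = E \<longrightarrow> E = {} \<or> E = UNIV)"

definition top_small :: "('a::topological_space \<Rightarrow> 'a) \<Rightarrow> 'a set \<Rightarrow> bool" where
  "top_small h F \<longleftrightarrow> closed F \<and>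
     (\<exists>m::nat. \<forall>d::nat \<Rightarrow> int. inj_on d {0..m} \<longrightarrow>
        (\<Inter>j\<in>{0..m}. zpow h (d j) ` F) = {})"

definition prec :: "('a::topological_space \<Rightarrow> 'a) \<Rightarrow> 'a set \<Rightarrow> 'a set \<Rightarrow> bool" where
  "prec h F U \<longleftrightarrow> (\<exists>(M::nat) (V::nat \<Rightarrow> 'a set) (d::nat \<Rightarrow> int).
     (\<forall>j\<le>M. open (V j)) \<and> F \<subseteq> (\<Union>j\<le>M. V j) \<and>
     (\<forall>j\<le>M. zpow h (d j) ` V j \<subseteq> U) \<and>
     (\<forall>i\<le>M. \<forall>j\<le>M. i \<noteq> j \<longrightarrow> zpow h (d i) ` V i \<inter> zpow h (d j) ` V j = {}))"

definition thin :: "('a::topological_space \<Rightarrow> 'a) \<Rightarrow> 'a set \<Rightarrow> bool" where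
  "thin h F \<longleftrightarrow> closed F \<and> (\<forall>U. open U \<and> U \<noteq> {} \<longrightarrow> prec h F U)"

definition return_time :: "('a \<Rightarrow> 'a) \<Rightarrow> 'a set \<Rightarrow> 'a \<Rightarrow> nat" where
  "return_time h Y y = (LEAST m. 1 \<le> m \<and> (h ^^ m) y \<in> Y)"

end

theory Submission
  imports Defs
begin

(* Minimality and compactness give a uniform bound on the time a forward orbit needs to enter
   the interior of Y, so return times are bounded.  Topological smallness of the boundary of Y
   means that every orbit meets it at most m times.  The level set of the return time n is
   determined by which of y, h y, ..., h^n y lie in Y, so the frontier of h^j of its closure lies
   in finitely many translates of the boundary of Y and again meets every orbit boundedly often.

   A closed set F meeting every orbit at most m times is thin, by induction on m.  Given U,
   split it into disjoint nonempty open U1, U2 (minimality on an infinite compact space leaves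
   no isolated points) and take a finite set D of times such that every orbit visits U1 at a
   time in D.  The points of F that return to F after a nonzero time in D - D form a closed set
   meeting orbits at most m - 1 times, so some open neighbourhood N of it is sent into U2.  The
   translates h^a (F - N), a in D, are pairwise disjoint and closed; separating them by open
   sets sends F - N into U1. *)

section \<open>Integer powers of a homeomorphism\<close>

lemma zpow_of_nat [simp]: "zpow h (int n) = h ^^ n"
  by (simp add: zpow_def)

lemma zpow_neg_of_nat: "zpow h (- int n) = inv h ^^ n"
  by (cases "n = 0") (auto simp: zpow_def)

lemma zpow_0 [simp]: "zpow h 0 = id"
  by (simp add: zpow_def)

lemma zpow_add_one:
  assumes "bij h"
  shows "zpow h (a + 1) = h \<circ> zpow h a"
proof (cases a)
  case (nonneg n)
  then have "a + 1 = int (Suc n)" by simp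
  then show ?thesis using nonneg by (simp only: zpow_of_nat) simp
next
  case (neg n)
  then have "a + 1 = - int n" by simp
  moreover have "h \<circ> inv h = id" using bij_is_surj[OF assms] surj_iff by blast
  ultimately show ?thesis
    using neg by (simp only: zpow_neg_of_nat funpow.simps(2) comp_assoc[symmetric]) simp
qed

lemma zpow_diff_one:
  assumes "bij h"
  shows "zpow h (a - 1) = inv h \<circ> zpow h a"
proof -
  have "inv h \<circ> h = id" using bij_is_inj[OF assms] inj_iff by blast
  then show ?thesis
    using zpow_add_one[OF assms, of "a - 1"] by (simp add: comp_assoc[symmetric])
qed

lemma zpow_add:
  assumes "bij h"
  shows "zpow h (a + b) = zpow h a \<circ> zpow h b"
proof (induction a rule: int_induct[where k = 0])
  case base
  then show ?case by simp
next
  case (step1 i)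
  have "zpow h (i + 1 + b) = h \<circ> zpow h (i + b)"
    using zpow_add_one[OF assms, of "i + b"] by (simp add: ac_simps)
  then show ?case using step1(2) by (simp add: zpow_add_one[OF assms] comp_assoc)
next
  case (step2 i)
  have "zpow h (i - 1 + b) = inv h \<circ> zpow h (i + b)"
    using zpow_diff_one[OF assms, of "i + b"] by (simp add: algebra_simps)
  then show ?case using step2(2) by (simp add: zpow_diff_one[OF assms] comp_assoc)
qed

lemma zpow_zpow:
  assumes "bij h"
  shows "zpow h a (zpow h b x) = zpow h (a + b) x"
  by (simp add: zpow_add[OF assms])

lemma bij_zpow:
  assumes "bij h"
  shows "bij (zpow h a)"
  by (rule o_bij[of "zpow h (- a)"]) (simp_all add: zpow_add[OF assms, symmetric])

lemma zpow_image_eq_vimage: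
  assumes "bij h"
  shows "zpow h a ` S = zpow h (- a) -` S"
proof
  show "zpow h a ` S \<subseteq> zpow h (- a) -` S" by (auto simp: zpow_zpow[OF assms])
  show "zpow h (- a) -` S \<subseteq> zpow h a ` S"
  proof
    fix x assume "x \<in> zpow h (- a) -` S"
    moreover have "x = zpow h a (zpow h (- a) x)" by (simp add: zpow_zpow[OF assms])
    ultimately show "x \<in> zpow h a ` S" by blast
  qed
qed

lemma continuous_on_funpow:
  fixes f :: "'a::topological_space \<Rightarrow> 'a"
  shows "continuous_on UNIV f \<Longrightarrow> continuous_on UNIV (f ^^ n)"
  by (induction n) (auto intro: continuous_on_compose2[of UNIV f UNIV])

lemma continuous_on_zpow:
  assumes "homeo h"
  shows "continuous_on UNIV (zpow h a)"
  using assms by (simp add: homeo_def zpow_def continuous_on_funpow)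

lemma open_zpow_vimage: "homeo h \<Longrightarrow> open S \<Longrightarrow> open (zpow h a -` S)"
  by (metis continuous_on_zpow open_vimage)

lemma closed_zpow_vimage: "homeo h \<Longrightarrow> closed S \<Longrightarrow> closed (zpow h a -` S)"
  by (metis continuous_on_zpow closed_vimage)

lemma open_zpow_image: "homeo h \<Longrightarrow> open S \<Longrightarrow> open (zpow h a ` S)"
  by (simp add: zpow_image_eq_vimage homeo_def open_zpow_vimage)

lemma closed_zpow_image: "homeo h \<Longrightarrow> closed S \<Longrightarrow> closed (zpow h a ` S)"
  by (simp add: zpow_image_eq_vimage homeo_def closed_zpow_vimage)

section \<open>Sets meeting every orbit boundedly often\<close>

definition visit_times :: "('a \<Rightarrow> 'a) \<Rightarrow> 'a set \<Rightarrow> 'a \<Rightarrow> int set" where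
  "visit_times h F x = {a. zpow h a x \<in> F}"

definition visits_bounded :: "('a \<Rightarrow> 'a) \<Rightarrow> 'a set \<Rightarrow> nat \<Rightarrow> bool" where
  "visits_bounded h F m \<longleftrightarrow> (\<forall>x. finite (visit_times h F x) \<and> card (visit_times h F x) \<le> m)"

lemma visits_bounded_subset:
  assumes "visits_bounded h A m" "B \<subseteq> A"
  shows "visits_bounded h B m"
proof -
  have "visit_times h B x \<subseteq> visit_times h A x" for x
    using assms(2) by (auto simp: visit_times_def)
  then show ?thesis
    using assms(1) unfolding visits_bounded_def by (meson card_mono finite_subset order_trans)
qed

lemma visits_bounded_Un:
  assumes "visits_bounded h A m" "visits_bounded h B n"
  shows "visits_bounded h (A \<union> B) (m + n)"
proof -
  have "visit_times h (A \<union> B) x = visit_times h A x \<union> visit_times h B x" for x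
    by (auto simp: visit_times_def)
  then show ?thesis
    using assms unfolding visits_bounded_def by (metis add_mono card_Un_le finite_UnI order_trans)
qed

lemma visits_bounded_UN:
  assumes "finite I" "\<And>i. i \<in> I \<Longrightarrow> visits_bounded h (A i) m"
  shows "visits_bounded h (\<Union>i\<in>I. A i) (card I * m)"
  using assms
proof (induction I rule: finite_induct)
  case empty
  then show ?case by (simp add: visits_bounded_def visit_times_def)
next
  case (insert i I)
  then show ?case using visits_bounded_Un[of h "A i" m] by simp
qed

lemma visits_bounded_zpow_vimage:
  assumes "bij h" "visits_bounded h F m"
  shows "visits_bounded h (zpow h c -` F) m"
proof -
  have "visit_times h (zpow h c -` F) x = (\<lambda>b. b - c) ` visit_times h F x" for x
    by (force simp: visit_times_def zpow_zpow[OF assms(1)] image_iff intro: exI[of _ "c + _"])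
  moreover have "inj_on (\<lambda>b. b - c) S" for S :: "int set" by (simp add: inj_on_def)
  ultimately show ?thesis
    using assms(2) by (simp add: visits_bounded_def card_image)
qed

lemma visits_bounded_0_empty:
  assumes "visits_bounded h F 0"
  shows "F = {}"
proof -
  have empty: "visit_times h F x = {}" for x
    using assms unfolding visits_bounded_def by (metis card_0_eq le_zero_eq)
  show ?thesis
  proof (rule equals0I)
    fix x assume "x \<in> F"
    then have "0 \<in> visit_times h F x" by (simp add: visit_times_def)
    then show False using empty by simp
  qed
qed

lemma visits_bounded_Int_zpow_image:
  assumes "bij h" "k \<noteq> 0" "visits_bounded h F (Suc m)"
  shows "visits_bounded h (F \<inter> zpow h k ` F) m"
  unfolding visits_bounded_def
proof
  fix x
  let ?S = "visit_times h F x" and ?T = "visit_times h (F \<inter> zpow h k ` F) x"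
  have S: "finite ?S" "card ?S \<le> Suc m"
    using assms(3) by (auto simp: visits_bounded_def)
  have T: "?T = {a \<in> ?S. a - k \<in> ?S}"
    by (auto simp: visit_times_def zpow_image_eq_vimage[OF assms(1)] zpow_zpow[OF assms(1)])
  show "finite ?T \<and> card ?T \<le> m"
  proof (cases "?S = {}")
    case True
    then show ?thesis using T by simp
  next
    case False
    \<comment> \<open>the extreme visit time on the side of \<open>- k\<close> has no partner at distance \<open>k\<close>\<close>
    define e where "e = (if 0 < k then Min ?S else Max ?S)"
    have "e \<in> ?S" using False S(1) by (simp add: e_def)
    moreover have "e - k \<notin> ?S"
    proof
      assume "e - k \<in> ?S"
      then have "Min ?S \<le> e - k" "e - k \<le> Max ?S" using S(1) by auto
      then show False using assms(2) by (auto simp: e_def split: if_splits)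
    qed
    ultimately have "?T \<subseteq> ?S - {e}" using T by auto
    then have "card ?T \<le> card ?S - 1"
      using S(1) \<open>e \<in> ?S\<close> by (metis card_Diff_singleton card_mono finite_Diff)
    then show ?thesis using T S by simp
  qed
qed

lemma top_small_imp_visits_bounded:
  assumes "bij h" "top_small h F"
  shows "\<exists>m. visits_bounded h F m"
proof -
  obtain m :: nat where m: "\<And>d. inj_on d {0..m} \<Longrightarrow> (\<Inter>j\<in>{0..m}. zpow h (d j) ` F) = {}"
    using assms(2) by (auto simp: top_small_def)
  have "finite (visit_times h F x) \<and> card (visit_times h F x) \<le> m" for x
  proof (rule ccontr)
    assume "\<not> ?thesis"
    then obtain T where T: "finite T" "card T = Suc m" "T \<subseteq> visit_times h F x"
      by (metis infinite_arbitrarily_large not_less_eq_eq obtain_subset_with_card_n)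
    then have "card {0..m} = card (uminus ` T)" by (simp add: card_image)
    then obtain d where d: "bij_betw d {0..m} (uminus ` T)"
      using T(1) by (metis finite_same_card_bij finite_atLeastAtMost finite_imageI)
    have "x \<in> zpow h (d j) ` F" if "j \<in> {0..m}" for j
      using T(3) bij_betwE[OF d] that
      by (force simp: visit_times_def zpow_image_eq_vimage[OF assms(1)])
    then show False using m[of d] bij_betw_imp_inj_on[OF d] by blast
  qed
  then show ?thesis unfolding visits_bounded_def by blast
qed

lemma precI:
  fixes M :: nat
  assumes "\<forall>j\<le>M. open (V j)" "F \<subseteq> (\<Union>j\<le>M. V j)" "\<forall>j\<le>M. zpow h (d j) ` V j \<subseteq> U"
    "\<forall>i\<le>M. \<forall>j\<le>M. i \<noteq> j \<longrightarrow> zpow h (d i) ` V i \<inter> zpow h (d j) ` V j = {}"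
  shows "prec h F U"
  unfolding prec_def by (rule exI[of _ M], rule exI[of _ V], rule exI[of _ d]) (use assms in \<open>intro conjI\<close>)

lemma precE:
  assumes "prec h F U"
  obtains M :: nat and V d where "\<forall>j\<le>M. open (V j)" "F \<subseteq> (\<Union>j\<le>M. V j)"
    "\<forall>j\<le>M. zpow h (d j) ` V j \<subseteq> U"
    "\<forall>i\<le>M. \<forall>j\<le>M. i \<noteq> j \<longrightarrow> zpow h (d i) ` V i \<inter> zpow h (d j) ` V j = {}"
  using assms unfolding prec_def by (elim exE conjE) (rule that)

lemma prec_finite_family:
  fixes V :: "'i \<Rightarrow> 'a::topological_space set" and d :: "'i \<Rightarrow> int"
  assumes "finite I" "\<And>i. i \<in> I \<Longrightarrow> open (V i)" "F \<subseteq> (\<Union>i\<in>I. V i)"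
    "\<And>i. i \<in> I \<Longrightarrow> zpow h (d i) ` V i \<subseteq> U"
    "disjoint_family_on (\<lambda>i. zpow h (d i) ` V i) I"
  shows "prec h F U"
proof -
  obtain n and f :: "nat \<Rightarrow> 'i" where onto: "f ` {..<n} = I" and inj: "inj_on f {..<n}"
    using finite_imp_nat_seg_image_inj_on[OF assms(1)] by (metis lessThan_def)
  define V' where "V' j = (if j < n then V (f j) else {})" for j
  have "F \<subseteq> (\<Union>j<n. V (f j))"
    using assms(3) onto by auto
  moreover have "(\<Union>j<n. V (f j)) \<subseteq> (\<Union>j\<le>n. V' j)"
    by (rule UN_mono) (auto simp: V'_def)
  ultimately have cover: "F \<subseteq> (\<Union>j\<le>n. V' j)"
    by (rule order_trans)
  have disjoint: "zpow h (d (f i)) ` V' i \<inter> zpow h (d (f j)) ` V' j = {}"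
    if "i \<noteq> j" for i j
  proof (cases "i < n \<and> j < n")
    case True
    then have "f i \<noteq> f j" using that inj by (simp add: inj_on_eq_iff)
    moreover have "f i \<in> I" "f j \<in> I" using True onto by auto
    ultimately show ?thesis using True assms(5) by (simp add: V'_def disjoint_family_on_def)
  qed (auto simp: V'_def)
  have "\<forall>j\<le>n. open (V' j)" "\<forall>j\<le>n. zpow h (d (f j)) ` V' j \<subseteq> U"
    using assms(2,4) onto by (auto simp: V'_def)
  then show ?thesis
    using cover disjoint by (intro precI[of n V' F h "d \<circ> f"]) simp_all
qed

lemma prec_mono:
  assumes "prec h A U" "B \<subseteq> A" "U \<subseteq> U'"
  shows "prec h B U'"
proof -
  obtain M :: nat and V d where V: "\<forall>j\<le>M. open (V j)" "A \<subseteq> (\<Union>j\<le>M. V j)"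
    "\<forall>j\<le>M. zpow h (d j) ` V j \<subseteq> U"
    "\<forall>i\<le>M. \<forall>j\<le>M. i \<noteq> j \<longrightarrow> zpow h (d i) ` V i \<inter> zpow h (d j) ` V j = {}"
    using assms(1) by (rule precE)
  have "B \<subseteq> (\<Union>j\<le>M. V j)" "\<forall>j\<le>M. zpow h (d j) ` V j \<subseteq> U'"
    using V(2,3) assms(2,3) by blast+
  then show ?thesis
    by (intro precI[OF V(1) _ _ V(4)])
qed

lemma prec_open_superset:
  assumes "prec h F U"
  obtains N where "open N" "F \<subseteq> N" "prec h N U"
proof -
  obtain M :: nat and V d where V: "\<forall>j\<le>M. open (V j)" "F \<subseteq> (\<Union>j\<le>M. V j)"
    "\<forall>j\<le>M. zpow h (d j) ` V j \<subseteq> U"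
    "\<forall>i\<le>M. \<forall>j\<le>M. i \<noteq> j \<longrightarrow> zpow h (d i) ` V i \<inter> zpow h (d j) ` V j = {}"
    using assms by (rule precE)
  have "prec h (\<Union>j\<le>M. V j) U"
    by (rule precI[OF V(1) order_refl V(3,4)])
  moreover have "open (\<Union>j\<le>M. V j)" using V(1) by (simp add: open_UN)
  ultimately show ?thesis using that V(2) by blast
qed

lemma prec_Un:
  assumes "prec h A U1" "prec h B U2" "U1 \<inter> U2 = {}"
  shows "prec h (A \<union> B) (U1 \<union> U2)"
proof -
  obtain M1 :: nat and V1 d1 where 1: "\<forall>j\<le>M1. open (V1 j)" "A \<subseteq> (\<Union>j\<le>M1. V1 j)"
    "\<forall>j\<le>M1. zpow h (d1 j) ` V1 j \<subseteq> U1"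
    "\<forall>i\<le>M1. \<forall>j\<le>M1. i \<noteq> j \<longrightarrow> zpow h (d1 i) ` V1 i \<inter> zpow h (d1 j) ` V1 j = {}"
    using assms(1) by (rule precE)
  obtain M2 :: nat and V2 d2 where 2: "\<forall>j\<le>M2. open (V2 j)" "B \<subseteq> (\<Union>j\<le>M2. V2 j)"
    "\<forall>j\<le>M2. zpow h (d2 j) ` V2 j \<subseteq> U2"
    "\<forall>i\<le>M2. \<forall>j\<le>M2. i \<noteq> j \<longrightarrow> zpow h (d2 i) ` V2 i \<inter> zpow h (d2 j) ` V2 j = {}"
    using assms(2) by (rule precE)
  let ?I = "Inl ` {..M1} \<union> Inr ` {..M2}"
  have images: "zpow h (case_sum d1 d2 i) ` case_sum V1 V2 i \<subseteq> case_sum (\<lambda>_. U1) (\<lambda>_. U2) i"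
    if "i \<in> ?I" for i
    using that 1(3) 2(3) by fastforce
  have disjoint: "zpow h (case_sum d1 d2 i) ` case_sum V1 V2 i \<inter>
      zpow h (case_sum d1 d2 j) ` case_sum V1 V2 j = {}" if "i \<in> ?I" "j \<in> ?I" "i \<noteq> j" for i j
  proof (cases i; cases j)
    fix a b assume "i = Inl a" "j = Inl b"
    then show ?thesis using that 1(4) by auto
  next
    fix a b assume "i = Inr a" "j = Inr b"
    then show ?thesis using that 2(4) by auto
  next
    fix a b assume "i = Inl a" "j = Inr b"
    then show ?thesis using images[OF that(1)] images[OF that(2)] assms(3) by auto
  next
    fix a b assume "i = Inr a" "j = Inl b"
    then show ?thesis using images[OF that(1)] images[OF that(2)] assms(3) by auto
  qed
  show ?thesis
  proof (rule prec_finite_family[where I = ?I and V = "case_sum V1 V2" and d = "case_sum d1 d2"])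
    show "disjoint_family_on (\<lambda>i. zpow h (case_sum d1 d2 i) ` case_sum V1 V2 i) ?I"
      using disjoint unfolding disjoint_family_on_def by blast
    show "A \<union> B \<subseteq> (\<Union>i\<in>?I. case_sum V1 V2 i)"
      using 1(2) 2(2) by force
    show "zpow h (case_sum d1 d2 i) ` case_sum V1 V2 i \<subseteq> U1 \<union> U2" if "i \<in> ?I" for i
      using images[OF that] by (cases i) auto
    show "open (case_sum V1 V2 i)" if "i \<in> ?I" for i
      using that 1(1) 2(1) by auto
    show "finite ?I" by blast
  qed
qed

lemma separation_closed_metric:
  fixes S T :: "'a::metric_space set"
  assumes "closed S" "closed T" "S \<inter> T = {}"
  obtains U V where "open U" "open V" "S \<subseteq> U" "T \<subseteq> V" "U \<inter> V = {}"
proof -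
  have "normal_space (euclidean :: 'a topology)"
    by (rule metrizable_imp_normal_space[OF metrizable_space_euclidean])
  then have "\<exists>U V. open U \<and> open V \<and> S \<subseteq> U \<and> T \<subseteq> V \<and> U \<inter> V = {}"
    using assms
    unfolding normal_space_def closed_closedin[symmetric] open_openin[symmetric] disjnt_def
    by blast
  then show ?thesis using that by blast
qed

lemma closed_disjoint_family_separation:
  fixes A :: "'i \<Rightarrow> 'a::metric_space set"
  assumes "finite D" "\<And>a. a \<in> D \<Longrightarrow> closed (A a)" "disjoint_family_on A D"
  obtains N where "\<And>a. a \<in> D \<Longrightarrow> open (N a)" "\<And>a. a \<in> D \<Longrightarrow> A a \<subseteq> N a"
    "disjoint_family_on N D"
proof -
  have "\<exists>N. (\<forall>a\<in>D. open (N a) \<and> A a \<subseteq> N a) \<and> disjoint_family_on N D"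
    using assms
  proof (induction D rule: finite_induct)
    case empty
    then show ?case by (auto simp: disjoint_family_on_def)
  next
    case (insert a D)
    then obtain N where N: "\<forall>b\<in>D. open (N b) \<and> A b \<subseteq> N b" "disjoint_family_on N D"
      by (auto simp: disjoint_family_on_insert)
    have "closed (A a)" "closed (\<Union>b\<in>D. A b)" "A a \<inter> (\<Union>b\<in>D. A b) = {}"
      using insert by (auto simp: disjoint_family_on_insert intro: closed_UN)
    then obtain P Q where PQ: "open P" "open Q" "A a \<subseteq> P" "(\<Union>b\<in>D. A b) \<subseteq> Q" "P \<inter> Q = {}"
      by (rule separation_closed_metric)
    define N' where "N' b = (if b = a then P else N b \<inter> Q)" for b
    have "\<forall>b\<in>insert a D. open (N' b) \<and> A b \<subseteq> N' b"
      using N(1) PQ insert.hyps(2) by (auto simp: N'_def)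
    moreover have "disjoint_family_on N' (insert a D)"
      using N(2) PQ(5) insert.hyps(2)
      by (auto simp: N'_def disjoint_family_on_insert disjoint_family_on_def)
    ultimately show ?case by blast
  qed
  then show ?thesis using that by blast
qed

lemma prec_disjoint_translates:
  fixes h :: "'a::metric_space \<Rightarrow> 'a"
  assumes "homeo h" "finite D" "closed F" "open U"
    and "\<And>x. x \<in> F \<Longrightarrow> \<exists>a\<in>D. zpow h a x \<in> U"
    and "disjoint_family_on (\<lambda>a. zpow h a ` F) D"
  shows "prec h F U"
proof -
  have bij: "bij h" using assms(1) by (simp add: homeo_def)
  obtain N where N: "\<And>a. a \<in> D \<Longrightarrow> open (N a)" "\<And>a. a \<in> D \<Longrightarrow> zpow h a ` F \<subseteq> N a"
    "disjoint_family_on N D"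
    using closed_disjoint_family_separation[OF assms(2) _ assms(6)]
      closed_zpow_image[OF assms(1,3)] by metis
  have image: "zpow h a ` (zpow h a -` (U \<inter> N a)) = U \<inter> N a" for a
    by (rule surj_image_vimage_eq[OF bij_is_surj[OF bij_zpow[OF bij]]])
  show ?thesis
  proof (rule prec_finite_family[where I = D and V = "\<lambda>a. zpow h a -` (U \<inter> N a)" and d = "\<lambda>a. a"])
    show "open (zpow h a -` (U \<inter> N a))" if "a \<in> D" for a
      using that N(1) assms(4) by (intro open_zpow_vimage[OF assms(1)] open_Int)
    show "F \<subseteq> (\<Union>a\<in>D. zpow h a -` (U \<inter> N a))"
      using assms(5) N(2) by blast
    show "zpow h a ` zpow h a -` (U \<inter> N a) \<subseteq> U" for a
      unfolding image by blast
    show "disjoint_family_on (\<lambda>a. zpow h a ` zpow h a -` (U \<inter> N a)) D"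
      unfolding image using N(3) by (auto simp: disjoint_family_on_def)
  qed (rule assms(2))
qed

lemma disjoint_family_zpow_image_Diff:
  assumes "bij h" "\<And>a b. a \<in> D \<Longrightarrow> b \<in> D \<Longrightarrow> a \<noteq> b \<Longrightarrow> F \<inter> zpow h (b - a) ` F \<subseteq> N"
  shows "disjoint_family_on (\<lambda>a. zpow h a ` (F - N)) D"
  unfolding disjoint_family_on_def
proof (intro ballI impI equals0I)
  fix a b y assume ab: "a \<in> D" "b \<in> D" "a \<noteq> b"
    and "y \<in> zpow h a ` (F - N) \<inter> zpow h b ` (F - N)"
  then obtain p q where pq: "p \<in> F - N" "q \<in> F - N" "zpow h a p = zpow h b q" by auto
  then have "p = zpow h (b - a) q"
    using zpow_zpow[OF assms(1), of "- a" a p] zpow_zpow[OF assms(1), of "- a" b q] by simp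
  then have "p \<in> F \<inter> zpow h (b - a) ` F" using pq(1,2) by blast
  then show False using assms(2)[OF ab] pq(1) by blast
qed

section \<open>Minimal homeomorphisms of compact spaces\<close>

lemma minimal_mapD:
  assumes "minimal_map h" "closed E" "h ` E = E"
  shows "E = {} \<or> E = UNIV"
  using assms unfolding minimal_map_def by blast

lemma minimal_orbit_meets_open:
  assumes "homeo h" "minimal_map h" "open U" "U \<noteq> {}"
  shows "\<exists>a. zpow h a x \<in> U"
proof -
  have bij: "bij h" using assms(1) by (simp add: homeo_def)
  define Orb where "Orb = (\<Union>a. zpow h a ` U)"
  have "open Orb" unfolding Orb_def using assms(1,3) by (auto intro: open_zpow_image)
  then have closed: "closed (- Orb)" by (rule closed_Compl)
  have "h ` Orb = (\<Union>a. zpow h (a + 1) ` U)"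
    by (simp add: Orb_def image_UN image_comp zpow_add_one[OF bij])
  also have "\<dots> = Orb"
    unfolding Orb_def by (rule SUP_eq; metis UNIV_I diff_add_cancel order_refl)
  finally have invariant: "h ` (- Orb) = - Orb"
    unfolding bij_image_Compl_eq[OF bij] by (rule arg_cong[where f = uminus])
  have "zpow h 0 ` U \<subseteq> Orb" unfolding Orb_def by blast
  then have "- Orb \<noteq> UNIV" using assms(4) by auto
  then have "- Orb = {}" using minimal_mapD[OF assms(2) closed invariant] by blast
  then obtain a where "x \<in> zpow h a ` U" unfolding Orb_def by blast
  then show ?thesis by (auto simp: zpow_image_eq_vimage[OF bij])
qed

lemma minimal_finite_hitting_set:
  assumes "compact (UNIV :: 'a::topological_space set)" "homeo h" "minimal_map h"
    and "open U" "U \<noteq> {}"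
  obtains D where "finite D" "D \<noteq> {}" "\<And>x::'a. \<exists>a\<in>D. zpow h a x \<in> U"
proof -
  obtain D where "finite D" and cover: "UNIV \<subseteq> (\<Union>a\<in>D. zpow h a -` U)"
  proof (rule compactE_image[OF assms(1), of UNIV "\<lambda>a. zpow h a -` U"])
    show "open (zpow h a -` U)" for a
      using assms(2,4) by (rule open_zpow_vimage)
    show "UNIV \<subseteq> (\<Union>a\<in>UNIV. zpow h a -` U)"
      using minimal_orbit_meets_open[OF assms(2-5)] by blast
  qed (use that in blast)
  show ?thesis
  proof (rule that)
    show "\<exists>a\<in>D. zpow h a x \<in> U" for x using cover by blast
    then show "D \<noteq> {}" by blast
  qed fact
qed

lemma minimal_forward_hitting_time_bounded:
  assumes "compact (UNIV :: 'a::topological_space set)" "homeo h" "minimal_map h"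
    and "open U" "U \<noteq> {}"
  obtains N :: nat where "\<And>x::'a. \<exists>n\<in>{1..N}. (h ^^ n) x \<in> U"
proof -
  have bij: "bij h" using assms(2) by (simp add: homeo_def)
  obtain D where D: "finite D" "D \<noteq> {}" "\<And>x::'a. \<exists>a\<in>D. zpow h a x \<in> U"
    using minimal_finite_hitting_set[OF assms] by blast
  \<comment> \<open>shifting by \<open>K\<close> turns the hitting times in \<open>D\<close> into positive ones\<close>
  define K where "K = 1 - Min D"
  have "\<exists>n\<in>{1..nat (Max D + K)}. (h ^^ n) x \<in> U" for x
  proof -
    obtain a where "a \<in> D" "zpow h (a + K) x \<in> U"
      using D(3)[of "zpow h K x"] by (auto simp: zpow_zpow[OF bij])
    moreover have "1 \<le> a + K" "a + K \<le> Max D + K"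
      using \<open>a \<in> D\<close> D(1) by (auto simp: K_def)
    moreover have "zpow h (a + K) = h ^^ nat (a + K)"
      using \<open>1 \<le> a + K\<close> by (simp add: zpow_def)
    ultimately show ?thesis
      by (intro bexI[of _ "nat (a + K)"]) auto
  qed
  then show ?thesis by (rule that)
qed

lemma minimal_open_split:
  fixes h :: "'a::t2_space \<Rightarrow> 'a" and U :: "'a set"
  assumes "compact (UNIV :: 'a set)" "infinite (UNIV :: 'a set)" "homeo h" "minimal_map h"
    and "open U" "U \<noteq> {}"
  obtains U1 U2 where "open U1" "open U2" "U1 \<noteq> {}" "U2 \<noteq> {}" "U1 \<subseteq> U" "U2 \<subseteq> U"
    "U1 \<inter> U2 = {}"
proof -
  have bij: "bij h" using assms(3) by (simp add: homeo_def)
  obtain u where u: "u \<in> U" using assms(6) by blast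
  \<comment> \<open>if \<open>U = {u}\<close>, finitely many translates of \<open>u\<close> would exhaust the space\<close>
  have "\<exists>v\<in>U. v \<noteq> u"
  proof (rule ccontr)
    assume "\<not> ?thesis"
    then have "U = {u}" using u by blast
    obtain D where D: "finite D" "\<And>x. \<exists>a\<in>D. zpow h a x \<in> U"
      using minimal_finite_hitting_set[OF assms(1,3,4,5,6)] by blast
    have "x \<in> (\<lambda>a. zpow h (- a) u) ` D" for x
    proof -
      obtain a where "a \<in> D" "zpow h a x = u" using D(2)[of x] \<open>U = {u}\<close> by blast
      then have "x = zpow h (- a) u" by (auto simp: zpow_zpow[OF bij])
      then show ?thesis using \<open>a \<in> D\<close> by blast
    qed
    then have "finite (UNIV :: 'a set)" using D(1) by (metis finite_imageI finite_subset subsetI)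
    then show False using assms(2) by blast
  qed
  then obtain v where "v \<in> U" "u \<noteq> v" by blast
  then obtain P Q where "open P" "open Q" "u \<in> P" "v \<in> Q" "P \<inter> Q = {}"
    using hausdorff[of u v] by auto
  then show ?thesis
    by (intro that[of "U \<inter> P" "U \<inter> Q"]) (use assms(5) u \<open>v \<in> U\<close> in auto)
qed

section \<open>Thin sets\<close>

lemma thin_empty: "thin h {}"
proof -
  have "prec h {} U" for U
    by (rule prec_finite_family[where I = "{}"]) (simp_all add: disjoint_family_on_def)
  then show ?thesis by (simp add: thin_def)
qed

lemma thin_Un:
  fixes h :: "'a::t2_space \<Rightarrow> 'a"
  assumes "compact (UNIV :: 'a set)" "infinite (UNIV :: 'a set)" "homeo h" "minimal_map h"
    and "thin h A" "thin h B"
  shows "thin h (A \<union> B)"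
  unfolding thin_def
proof (intro conjI allI impI)
  show "closed (A \<union> B)" using assms(5,6) by (simp add: thin_def closed_Un)
  fix U :: "'a set" assume U: "open U \<and> U \<noteq> {}"
  obtain U1 U2 where U12: "open U1" "open U2" "U1 \<noteq> {}" "U2 \<noteq> {}" "U1 \<subseteq> U" "U2 \<subseteq> U"
    "U1 \<inter> U2 = {}"
    using minimal_open_split[OF assms(1-4), of U] U by blast
  have "prec h A U1" "prec h B U2" using assms(5,6) U12 by (simp_all add: thin_def)
  then have "prec h (A \<union> B) (U1 \<union> U2)" using U12(7) by (rule prec_Un)
  moreover have "U1 \<union> U2 \<subseteq> U" using U12(5,6) by blast
  ultimately show "prec h (A \<union> B) U" by (rule prec_mono[OF _ order_refl])
qed

lemma thin_UN:
  fixes h :: "'a::t2_space \<Rightarrow> 'a"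
  assumes "compact (UNIV :: 'a set)" "infinite (UNIV :: 'a set)" "homeo h" "minimal_map h"
    and "finite K" "\<And>k. k \<in> K \<Longrightarrow> thin h (G k)"
  shows "thin h (\<Union>k\<in>K. G k)"
  using assms(5,6)
proof (induction K rule: finite_induct)
  case empty
  then show ?case by (simp add: thin_empty)
next
  case (insert k K)
  then show ?case using thin_Un[OF assms(1-4)] by simp
qed

lemma closed_visits_bounded_imp_thin:
  fixes h :: "'a::metric_space \<Rightarrow> 'a"
  assumes "compact (UNIV :: 'a set)" "infinite (UNIV :: 'a set)" "homeo h" "minimal_map h"
    and "closed F" "visits_bounded h F m"
  shows "thin h F"
  using assms(5,6)
proof (induction m arbitrary: F)
  case 0
  then show ?case using visits_bounded_0_empty thin_empty by metis
next
  case (Suc m)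
  have bij: "bij h" using assms(3) by (simp add: homeo_def)
  show "thin h F" unfolding thin_def
  proof (intro conjI allI impI)
    show "closed F" by (rule Suc.prems(1))
    fix U :: "'a set" assume U: "open U \<and> U \<noteq> {}"
    obtain U1 U2 where U12: "open U1" "open U2" "U1 \<noteq> {}" "U2 \<noteq> {}" "U1 \<subseteq> U" "U2 \<subseteq> U"
      "U1 \<inter> U2 = {}"
      using minimal_open_split[OF assms(1-4), of U] U by blast
    obtain D where D: "finite D" "\<And>x. \<exists>a\<in>D. zpow h a x \<in> U1"
      using minimal_finite_hitting_set[OF assms(1,3,4) U12(1,3)] by blast
    define K where "K = (\<lambda>(a, b). b - a) ` (D \<times> D) - {0}"
    define G where "G = (\<Union>k\<in>K. F \<inter> zpow h k ` F)"
    have "thin h (F \<inter> zpow h k ` F)" if "k \<in> K" for k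
    proof (rule Suc.IH)
      show "closed (F \<inter> zpow h k ` F)"
        using Suc.prems(1) closed_zpow_image[OF assms(3)] by blast
      show "visits_bounded h (F \<inter> zpow h k ` F) m"
        using that Suc.prems(2) by (intro visits_bounded_Int_zpow_image[OF bij]) (auto simp: K_def)
    qed
    then have "thin h G"
      unfolding G_def using D(1) by (intro thin_UN[OF assms(1-4)]) (auto simp: K_def)
    then obtain N where N: "open N" "G \<subseteq> N" "prec h N U2"
      using U12(2,4) prec_open_superset unfolding thin_def by metis
    have "F \<inter> zpow h (b - a) ` F \<subseteq> N" if "a \<in> D" "b \<in> D" "a \<noteq> b" for a b
    proof -
      have "b - a \<in> K" using that by (force simp: K_def)
      then show ?thesis using N(2) unfolding G_def by blast
    qed
    then have "disjoint_family_on (\<lambda>a. zpow h a ` (F - N)) D"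
      by (rule disjoint_family_zpow_image_Diff[OF bij])
    then have "prec h (F - N) U1"
      using D Suc.prems(1) U12(1) N(1)
      by (intro prec_disjoint_translates[OF assms(3)]) auto
    then have "prec h ((F - N) \<union> N) (U1 \<union> U2)" using N(3) U12(7) by (rule prec_Un)
    moreover have "F \<subseteq> (F - N) \<union> N" by blast
    moreover have "U1 \<union> U2 \<subseteq> U" using U12(5,6) by blast
    ultimately show "prec h F U" by (rule prec_mono)
  qed
qed

section \<open>Frontiers of return-time level sets\<close>

lemma frontier_vimage_subset:
  assumes "continuous_on UNIV g"
  shows "frontier (g -` S) \<subseteq> g -` frontier S"
proof -
  have "closure (g -` S) \<subseteq> g -` closure S"
    using closure_subset closed_vimage[OF closed_closure assms]
    by (metis closure_minimal vimage_mono)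
  moreover have "g -` interior S \<subseteq> interior (g -` S)"
    using interior_subset open_vimage[OF open_interior assms]
    by (metis interior_maximal vimage_mono)
  ultimately show ?thesis unfolding frontier_def by blast
qed

lemma frontier_closure_subset: "frontier (closure S) \<subseteq> frontier S"
  unfolding frontier_def using interior_mono[OF closure_subset, of S] by auto

lemma open_nbhd_same_side:
  assumes "continuous_on UNIV g" "g x \<notin> frontier Y"
  obtains W where "open W" "x \<in> W" "\<And>w. w \<in> W \<Longrightarrow> g w \<in> Y \<longleftrightarrow> g x \<in> Y"
proof -
  have "g x \<in> interior Y \<or> g x \<in> interior (- Y)"
    using assms(2) by (auto simp: frontier_def interior_complement)
  then show ?thesis
  proof
    assume "g x \<in> interior Y"
    then show ?thesis
      using that[of "g -` interior Y"] open_vimage[OF open_interior assms(1)] interior_subset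
      by blast
  next
    assume "g x \<in> interior (- Y)"
    then show ?thesis
      using that[of "g -` interior (- Y)"] open_vimage[OF open_interior assms(1)] interior_subset
      by blast
  qed
qed

lemma frontier_subset_vimage_frontier:
  fixes g :: "'i \<Rightarrow> 'a::topological_space \<Rightarrow> 'b::topological_space"
  assumes "finite I" "\<And>i. i \<in> I \<Longrightarrow> continuous_on UNIV (g i)"
    and "\<And>y z. (\<And>i. i \<in> I \<Longrightarrow> g i y \<in> Y \<longleftrightarrow> g i z \<in> Y) \<Longrightarrow> y \<in> C \<longleftrightarrow> z \<in> C"
  shows "frontier C \<subseteq> (\<Union>i\<in>I. g i -` frontier Y)"
proof
  fix x assume x: "x \<in> frontier C"
  show "x \<in> (\<Union>i\<in>I. g i -` frontier Y)"
  proof (rule ccontr)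
    assume "x \<notin> (\<Union>i\<in>I. g i -` frontier Y)"
    then have "\<forall>i\<in>I. \<exists>W. open W \<and> x \<in> W \<and> (\<forall>w\<in>W. g i w \<in> Y \<longleftrightarrow> g i x \<in> Y)"
      using open_nbhd_same_side[OF assms(2)] by (metis UN_I vimageI)
    then obtain W where W: "\<And>i. i \<in> I \<Longrightarrow> open (W i) \<and> x \<in> W i \<and>
        (\<forall>w\<in>W i. g i w \<in> Y \<longleftrightarrow> g i x \<in> Y)"
      by metis
    have "open (\<Inter>i\<in>I. W i)" using W assms(1) by (auto intro: open_INT)
    moreover have "x \<in> (\<Inter>i\<in>I. W i)" using W by blast
    moreover have "w \<in> C \<longleftrightarrow> x \<in> C" if "w \<in> (\<Inter>i\<in>I. W i)" for w
      using that W by (intro assms(3)) blast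
    ultimately have "x \<in> interior C \<or> x \<in> interior (- C)"
      by (cases "x \<in> C") (auto intro: interiorI[of "\<Inter>i\<in>I. W i"])
    then show False using x by (auto simp: frontier_def interior_complement)
  qed
qed

lemma return_time_le:
  assumes "1 \<le> n" "(h ^^ n) y \<in> Y"
  shows "return_time h Y y \<le> n"
  unfolding return_time_def using assms by (simp add: Least_le)

lemma return_time_eq_iff:
  assumes "1 \<le> m" "(h ^^ m) y \<in> Y"
  shows "return_time h Y y = n \<longleftrightarrow>
    1 \<le> n \<and> (h ^^ n) y \<in> Y \<and> (\<forall>k. 1 \<le> k \<and> k < n \<longrightarrow> (h ^^ k) y \<notin> Y)"
proof
  assume n: "return_time h Y y = n"
  have "1 \<le> n \<and> (h ^^ n) y \<in> Y"
    using LeastI[of "\<lambda>m. 1 \<le> m \<and> (h ^^ m) y \<in> Y", OF conjI[OF assms]] n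
    by (simp add: return_time_def)
  moreover have "(h ^^ k) y \<notin> Y" if "1 \<le> k" "k < n" for k
    using not_less_Least[of k "\<lambda>m. 1 \<le> m \<and> (h ^^ m) y \<in> Y"] that n
    by (auto simp: return_time_def)
  ultimately show "1 \<le> n \<and> (h ^^ n) y \<in> Y \<and> (\<forall>k. 1 \<le> k \<and> k < n \<longrightarrow> (h ^^ k) y \<notin> Y)"
    by blast
next
  assume "1 \<le> n \<and> (h ^^ n) y \<in> Y \<and> (\<forall>k. 1 \<le> k \<and> k < n \<longrightarrow> (h ^^ k) y \<notin> Y)"
  then show "return_time h Y y = n"
    unfolding return_time_def by (intro Least_equality) (auto simp: not_less[symmetric])
qed

lemma frontier_return_level_subset:
  fixes h :: "'a::topological_space \<Rightarrow> 'a"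
  assumes "continuous_on UNIV h" "\<forall>y\<in>Y. \<exists>m\<ge>1. (h ^^ m) y \<in> Y"
  shows "frontier {y\<in>Y. return_time h Y y = n} \<subseteq> (\<Union>i\<le>n. (h ^^ i) -` frontier Y)"
proof (rule frontier_subset_vimage_frontier)
  show "continuous_on UNIV (h ^^ i)" for i using assms(1) by (rule continuous_on_funpow)
  have level: "y \<in> {y\<in>Y. return_time h Y y = n} \<longleftrightarrow>
      (h ^^ 0) y \<in> Y \<and> 1 \<le> n \<and> (h ^^ n) y \<in> Y \<and> (\<forall>k. 1 \<le> k \<and> k < n \<longrightarrow> (h ^^ k) y \<notin> Y)" for y
    using assms(2) return_time_eq_iff[of _ h y Y n] by auto
  show "y \<in> {y\<in>Y. return_time h Y y = n} \<longleftrightarrow> z \<in> {y\<in>Y. return_time h Y y = n}"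
    if "\<And>i. i \<in> {..n} \<Longrightarrow> (h ^^ i) y \<in> Y \<longleftrightarrow> (h ^^ i) z \<in> Y" for y z
    unfolding level using that by (metis atMost_iff less_imp_le zero_le order_refl)
qed simp

lemma visits_bounded_frontier_image_return_level:
  fixes h :: "'a::topological_space \<Rightarrow> 'a"
  assumes "homeo h" "\<forall>y\<in>Y. \<exists>m\<ge>1. (h ^^ m) y \<in> Y" "visits_bounded h (frontier Y) m"
  shows "visits_bounded h (frontier ((h ^^ j) ` closure {y\<in>Y. return_time h Y y = n}))
    (card {..n} * m)"
proof -
  have bij: "bij h" using assms(1) by (simp add: homeo_def)
  let ?C = "{y\<in>Y. return_time h Y y = n}" and ?g = "zpow h (- int j)"
  have "(h ^^ j) ` closure ?C = ?g -` closure ?C"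
    using zpow_image_eq_vimage[OF bij, of "int j"] by simp
  then have "frontier ((h ^^ j) ` closure ?C) \<subseteq> ?g -` frontier (closure ?C)"
    using frontier_vimage_subset[OF continuous_on_zpow[OF assms(1)]] by simp
  also have "\<dots> \<subseteq> (\<Union>i\<le>n. ?g -` (h ^^ i) -` frontier Y)"
    using frontier_closure_subset frontier_return_level_subset[OF _ assms(2)]
      assms(1) by (fastforce simp: homeo_def)
  finally have frontier_subset: "frontier ((h ^^ j) ` closure ?C) \<subseteq> \<dots>" .
  have "visits_bounded h (\<Union>i\<le>n. ?g -` (h ^^ i) -` frontier Y) (card {..n} * m)"
  proof (rule visits_bounded_UN)
    fix i
    have "visits_bounded h (zpow h (int i) -` frontier Y) m"
      by (rule visits_bounded_zpow_vimage[OF bij assms(3)])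
    then show "visits_bounded h (?g -` (h ^^ i) -` frontier Y) m"
      by (intro visits_bounded_zpow_vimage[OF bij]) simp
  qed simp
  then show ?thesis using frontier_subset by (rule visits_bounded_subset)
qed

theorem lemma5p5:
  fixes h :: "'a::metric_space \<Rightarrow> 'a" and Y :: "'a set"
  assumes "compact (UNIV :: 'a set)" and "infinite (UNIV :: 'a set)"
    and "homeo h" and "minimal_map h"
    and "closed Y" and "interior Y \<noteq> {}" and "top_small h (frontier Y)"
  shows "(\<forall>y\<in>Y. \<exists>m\<ge>1. (h ^^ m) y \<in> Y) \<and> finite (return_time h Y ` Y) \<and>
    (\<forall>n\<in>return_time h Y ` Y. \<forall>j<n.
       thin h (frontier ((h ^^ j) ` closure {y\<in>Y. return_time h Y y = n})))"
proof -
  have bij: "bij h" using assms(3) by (simp add: homeo_def)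
  obtain N where "\<And>x. \<exists>n\<in>{1..N}. (h ^^ n) x \<in> interior Y"
    using minimal_forward_hitting_time_bounded[OF assms(1,3,4) open_interior assms(6)] by blast
  then have N: "\<exists>n\<in>{1..N}. (h ^^ n) x \<in> Y" for x using interior_subset by blast
  then have returns: "\<forall>y\<in>Y. \<exists>m\<ge>1. (h ^^ m) y \<in> Y" by (meson atLeastAtMost_iff)
  have "return_time h Y ` Y \<subseteq> {..N}"
    using N by (force intro: order_trans[OF return_time_le])
  then have finite: "finite (return_time h Y ` Y)" by (rule finite_subset) simp
  obtain m where "visits_bounded h (frontier Y) m"
    using top_small_imp_visits_bounded[OF bij assms(7)] by blast
  then have thin: "thin h (frontier ((h ^^ j) ` closure {y\<in>Y. return_time h Y y = n}))" for n j
    using visits_bounded_frontier_image_return_level[OF assms(3) returns]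
    by (intro closed_visits_bounded_imp_thin[OF assms(1-4) frontier_closed])
  show ?thesis using returns finite thin by blast
qed

end
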